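(* Let $N$ be a natural number, $P=\{a\subseteq N: |a|\geq 2\}$, and let $\|\cdot\|_3$ be the graph coloring norm on subsets of $P$ (defined in the context). Let $E=\{e\subseteq N:|e|=2\}$ and for $A\subseteq P$ let \[\mathcal E_A=\{E'\subseteq E: (\forall e\in E')(\exists p\in A)\, e\subseteq p\ \text{ and }\ (\forall p\in A)(\exists e\in E')\, e\subseteq p\}.\] Then for every $A\subseteq P$, \[\|A\|_3=\min\{\|E'\|_3: E'\in\mathcal E_A\}.\]
   Context: $N=\{0,\ldots,N-1\}$. For $A\subseteq P$ and $z\subseteq N$ let $A\restriction z=\{a\in A: a\subseteq z\}$. The relation "$\|A\|_3\geq m$" is defined recursively: $\|A\|_3\geq 0$ always; $\|A\|_3\geq 1$ iff $A\neq\emptyset$; for $m\geq 1$, $\|A\|_3\geq m+1$ iff for every $z\subseteq N$ either $\|A\restriction z\|_3\geq m$ or $\|A\restriction(N\setminus z)\|_3\geq m$. Then $\|A\|_3$ is the largest $m$ with $\|A\|_3\geq m$. *)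

theory Defs
  imports Main
begin

text \<open>Ground set N = {0,...,N-1} is represented as {..<N}.\<close>

definition restr :: "nat set set \<Rightarrow> nat set \<Rightarrow> nat set set" where
  "restr A z = {a \<in> A. a \<subseteq> z}"

text \<open>norm3_ge N A m  means  ||A||_3 >= m.\<close>
fun norm3_ge :: "nat \<Rightarrow> nat set set \<Rightarrow> nat \<Rightarrow> bool" where
  "norm3_ge N A 0 = True"
| "norm3_ge N A (Suc 0) = (A \<noteq> {})"
| "norm3_ge N A (Suc (Suc m)) =
     (\<forall>z. z \<subseteq> {..<N} \<longrightarrow>
        norm3_ge N (restr A z) (Suc m) \<or> norm3_ge N (restr A ({..<N} - z)) (Suc m))"

definition norm3 :: "nat \<Rightarrow> nat set set \<Rightarrow> nat" where
  "norm3 N A = (GREATEST m. norm3_ge N A m)"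

definition Pset :: "nat \<Rightarrow> nat set set" where
  "Pset N = {a. a \<subseteq> {..<N} \<and> card a \<ge> 2}"

definition Eset :: "nat \<Rightarrow> nat set set" where
  "Eset N = {e. e \<subseteq> {..<N} \<and> card e = 2}"

definition calE :: "nat \<Rightarrow> nat set set \<Rightarrow> nat set set set" where
  "calE N A = {E'. E' \<subseteq> Eset N \<and> (\<forall>e\<in>E'. \<exists>p\<in>A. e \<subseteq> p) \<and> (\<forall>p\<in>A. \<exists>e\<in>E'. e \<subseteq> p)}"

end

theory Submission
  imports Defs
begin

text \<open>
  If every member of \<open>A\<close> contains an edge of \<open>E'\<close>, then each nonempty restriction of \<open>A\<close>
  has a nonempty restriction of \<open>E'\<close> below it, so \<open>\<parallel>A\<parallel>\<^sub>3 \<le> \<parallel>E'\<parallel>\<^sub>3\<close>.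
  Conversely, if \<open>\<parallel>A\<parallel>\<^sub>3 \<le> m\<close> with \<open>m \<ge> 1\<close>, some split \<open>z\<close> gives both \<open>A\<restriction>z\<close> and \<open>A\<restriction>(N-z)\<close>
  norm below \<open>m\<close>; by induction both have edge systems of norm below \<open>m\<close>. Adding, for every
  member of \<open>A\<close> meeting both sides, an edge crossing the split yields an edge system for \<open>A\<close>
  whose restrictions to the two sides are exactly these two, so its norm is at most \<open>m\<close>.
\<close>

lemma restr_subset: "restr A z \<subseteq> A"
  by (auto simp: restr_def)

lemma norm3_ge_Suc_empty [simp]: "\<not> norm3_ge N {} (Suc m)"
  by (induction m) (auto simp: restr_def)

lemma norm3_ge_SucD: "norm3_ge N A (Suc m) \<Longrightarrow> norm3_ge N A m"
proof (induction N A m rule: norm3_ge.induct)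
  case (2 N A)
  then have "norm3_ge N (restr A {}) (Suc 0) \<or> norm3_ge N (restr A ({..<N} - {})) (Suc 0)"
    by (simp only: norm3_ge.simps) blast
  then show ?case using restr_subset by auto
next
  case (3 N A m)
  then show ?case by (metis norm3_ge.simps(3))
qed simp

lemma norm3_ge_antimono:
  assumes "norm3_ge N A n" and "m \<le> n"
  shows "norm3_ge N A m"
  using assms(2,1) by (induction m rule: inc_induct) (auto intro: norm3_ge_SucD)

lemma restr_singleton_empty:
  assumes "\<forall>a\<in>A. 2 \<le> card a"
  shows "restr A {w} = {}"
proof -
  have "a \<notin> A" if "a \<subseteq> {w}" for a
    using assms card_mono[OF _ that] by fastforce
  then show ?thesis by (auto simp: restr_def)
qed

lemma norm3_ge_Suc_card_bound:
  assumes "finite W" and "W \<subseteq> {..<N}" and "\<forall>a\<in>A. a \<subseteq> W \<and> 2 \<le> card a"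
    and "norm3_ge N A (Suc m)"
  shows "m + 2 \<le> card W"
  using assms
proof (induction m arbitrary: A W)
  case 0
  then obtain a where "a \<in> A" by auto
  with "0.prems"(3) have "a \<subseteq> W" "2 \<le> card a" by auto
  then show ?case using card_mono[OF "0.prems"(1), of a] by simp
next
  case (Suc m)
  have "A \<noteq> {}" using Suc.prems(4) by (metis norm3_ge_Suc_empty)
  then obtain a where "a \<in> A" by blast
  with Suc.prems(3) have "a \<subseteq> W" "a \<noteq> {}" by auto
  then obtain w where w: "w \<in> W" by blast
  have "{w} \<subseteq> {..<N}" using w Suc.prems(2) by auto
  with Suc.prems(4) have "norm3_ge N (restr A {w}) (Suc m) \<or> norm3_ge N (restr A ({..<N} - {w})) (Suc m)"
    by (simp only: norm3_ge.simps)
  moreover have "restr A {w} = {}"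
    using Suc.prems(3) by (simp add: restr_singleton_empty)
  ultimately have "norm3_ge N (restr A ({..<N} - {w})) (Suc m)" by simp
  moreover have "\<forall>a\<in>restr A ({..<N} - {w}). a \<subseteq> W - {w} \<and> 2 \<le> card a"
    using Suc.prems(3) by (auto simp: restr_def)
  moreover have "finite (W - {w})" "W - {w} \<subseteq> {..<N}"
    using Suc.prems(1,2) by auto
  ultimately have "m + 2 \<le> card (W - {w})"
    by (intro Suc.IH)
  then show ?case using w Suc.prems(1) by (simp add: card_Diff_singleton)
qed

lemma norm3_ge_bounded: "A \<subseteq> Pset N \<Longrightarrow> \<not> norm3_ge N A (Suc N)"
  using norm3_ge_Suc_card_bound[of "{..<N}" N A N] by (auto simp: Pset_def)

lemma norm3_ge_iff_le_norm3:
  assumes "A \<subseteq> Pset N"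
  shows "norm3_ge N A m \<longleftrightarrow> m \<le> norm3 N A"
proof -
  have bounded: "k \<le> N" if "norm3_ge N A k" for k
    using norm3_ge_bounded[OF assms] norm3_ge_antimono[OF that, of "Suc N"] by fastforce
  have "norm3_ge N A (norm3 N A)"
    unfolding norm3_def by (rule GreatestI_nat[of _ 0]) (auto intro: bounded)
  moreover have "k \<le> norm3 N A" if "norm3_ge N A k" for k
    unfolding norm3_def using that bounded by (rule Greatest_le_nat)
  ultimately show ?thesis using norm3_ge_antimono by blast
qed

lemma norm3_ge_if_covered:
  assumes "\<forall>p\<in>A. \<exists>e\<in>B. e \<subseteq> p" and "norm3_ge N A m"
  shows "norm3_ge N B m"
  using assms
proof (induction N A m arbitrary: B rule: norm3_ge.induct)
  case (3 N A m)
  show ?case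
  proof (simp only: norm3_ge.simps, intro allI impI)
    fix z assume z: "z \<subseteq> {..<N}"
    have covered: "\<forall>p\<in>restr A y. \<exists>e\<in>restr B y. e \<subseteq> p" for y
      using "3.prems"(1) unfolding restr_def by (fastforce intro: order_trans)
    have "norm3_ge N (restr A z) (Suc m) \<or> norm3_ge N (restr A ({..<N} - z)) (Suc m)"
      using "3.prems"(2) z by simp
    then show "norm3_ge N (restr B z) (Suc m) \<or> norm3_ge N (restr B ({..<N} - z)) (Suc m)"
      using "3.IH"(1)[OF z covered] "3.IH"(2)[OF z covered] by blast
  qed
qed auto

definition crossing_edges :: "nat \<Rightarrow> nat set set \<Rightarrow> nat set \<Rightarrow> nat set set" where
  "crossing_edges N A z = {e \<in> Eset N. (\<exists>p\<in>A. e \<subseteq> p) \<and> \<not> e \<subseteq> z \<and> \<not> e \<subseteq> {..<N} - z}"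

lemma restr_Un: "restr (A \<union> B) z = restr A z \<union> restr B z"
  by (auto simp: restr_def)

lemma restr_crossing_edges:
  "restr (crossing_edges N A z) z = {}" "restr (crossing_edges N A z) ({..<N} - z) = {}"
  by (auto simp: restr_def crossing_edges_def)

lemma calE_subset_Eset: "E \<in> calE N A \<Longrightarrow> E \<subseteq> Eset N"
  by (simp add: calE_def)

lemma calE_restr_self: "E \<in> calE N (restr A y) \<Longrightarrow> restr E y = E"
  by (fastforce simp: calE_def restr_def)

lemma calE_restr_disjoint:
  assumes "E \<in> calE N (restr A y)" and "y \<inter> y' = {}"
  shows "restr E y' = {}"
proof -
  have "e \<noteq> {}" if "e \<in> E" for e
    using calE_subset_Eset[OF assms(1)] that by (auto simp: Eset_def)
  moreover have "e \<subseteq> y" if "e \<in> E" for e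
    using calE_restr_self[OF assms(1)] that by (auto simp: restr_def)
  ultimately show ?thesis
    using assms(2) unfolding restr_def by blast
qed

lemma crossing_edge_exists:
  assumes "p \<in> A" and "p \<subseteq> {..<N}" and "\<not> p \<subseteq> z" and "\<not> p \<subseteq> {..<N} - z"
  shows "\<exists>e\<in>crossing_edges N A z. e \<subseteq> p"
proof -
  obtain x y where "x \<in> p" "x \<notin> z" "y \<in> p" "y \<in> z"
    using assms(2-4) by blast
  moreover from this have "x \<noteq> y" by blast
  ultimately have "{x, y} \<in> crossing_edges N A z" "{x, y} \<subseteq> p"
    using assms(1,2) by (auto simp: crossing_edges_def Eset_def)
  then show ?thesis by blast
qed

lemma calE_glue:
  assumes A: "A \<subseteq> Pset N"
    and E1: "E1 \<in> calE N (restr A z)" and E2: "E2 \<in> calE N (restr A ({..<N} - z))"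
  shows "E1 \<union> E2 \<union> crossing_edges N A z \<in> calE N A"
  unfolding calE_def
proof (intro CollectI conjI ballI)
  have "crossing_edges N A z \<subseteq> Eset N"
    unfolding crossing_edges_def by blast
  then show "E1 \<union> E2 \<union> crossing_edges N A z \<subseteq> Eset N"
    using calE_subset_Eset[OF E1] calE_subset_Eset[OF E2] by simp
next
  have inherited: "\<forall>e\<in>E. \<exists>p\<in>A. e \<subseteq> p" if E: "E \<in> calE N (restr A y)" for E y
  proof
    fix e assume "e \<in> E"
    then obtain p where "p \<in> restr A y" "e \<subseteq> p" using E by (auto simp: calE_def)
    then show "\<exists>p\<in>A. e \<subseteq> p" using restr_subset by blast
  qed
  fix e assume "e \<in> E1 \<union> E2 \<union> crossing_edges N A z"
  then show "\<exists>p\<in>A. e \<subseteq> p"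
    using inherited[OF E1] inherited[OF E2] by (auto simp: crossing_edges_def)
next
  fix p assume p: "p \<in> A"
  then have pN: "p \<subseteq> {..<N}" using A by (auto simp: Pset_def)
  consider "p \<subseteq> z" | "p \<subseteq> {..<N} - z" | "\<not> p \<subseteq> z" "\<not> p \<subseteq> {..<N} - z" by blast
  then show "\<exists>e\<in>E1 \<union> E2 \<union> crossing_edges N A z. e \<subseteq> p"
  proof cases
    case 1
    then have "p \<in> restr A z" using p by (simp add: restr_def)
    moreover have "\<forall>q\<in>restr A z. \<exists>e\<in>E1. e \<subseteq> q" using E1 by (simp add: calE_def)
    ultimately show ?thesis by blast
  next
    case 2
    then have "p \<in> restr A ({..<N} - z)" using p by (simp add: restr_def)
    moreover have "\<forall>q\<in>restr A ({..<N} - z). \<exists>e\<in>E2. e \<subseteq> q" using E2 by (simp add: calE_def)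
    ultimately show ?thesis by blast
  next
    case 3
    then show ?thesis using crossing_edge_exists[OF p pN] by blast
  qed
qed

lemma exists_calE_not_norm3_ge:
  assumes "A \<subseteq> Pset N" and "\<not> norm3_ge N A (Suc m)"
  shows "\<exists>E\<in>calE N A. \<not> norm3_ge N E (Suc m)"
  using assms
proof (induction m arbitrary: A)
  case 0
  then show ?case by (auto simp: calE_def)
next
  case (Suc m)
  obtain z where z: "z \<subseteq> {..<N}"
    and small1: "\<not> norm3_ge N (restr A z) (Suc m)"
    and small2: "\<not> norm3_ge N (restr A ({..<N} - z)) (Suc m)"
    using Suc.prems(2) by (simp only: norm3_ge.simps) blast
  have restr_Pset: "restr A y \<subseteq> Pset N" for y
    using Suc.prems(1) restr_subset by blast
  obtain E1 where E1: "E1 \<in> calE N (restr A z)" "\<not> norm3_ge N E1 (Suc m)"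
    using Suc.IH[OF restr_Pset small1] by blast
  obtain E2 where E2: "E2 \<in> calE N (restr A ({..<N} - z))" "\<not> norm3_ge N E2 (Suc m)"
    using Suc.IH[OF restr_Pset small2] by blast
  define E where "E = E1 \<union> E2 \<union> crossing_edges N A z"
  have "z \<inter> ({..<N} - z) = {}" "({..<N} - z) \<inter> z = {}" by auto
  then have "restr E z = E1" "restr E ({..<N} - z) = E2"
    using calE_restr_self[OF E1(1)] calE_restr_disjoint[OF E1(1)]
      calE_restr_self[OF E2(1)] calE_restr_disjoint[OF E2(1)]
    by (simp_all add: E_def restr_Un restr_crossing_edges)
  then have "\<not> norm3_ge N E (Suc (Suc m))"
    using z E1(2) E2(2) by (simp only: norm3_ge.simps) blast
  moreover have "E \<in> calE N A"
    unfolding E_def using calE_glue[OF Suc.prems(1) E1(1) E2(1)] .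
  ultimately show ?case by blast
qed

lemma calE_subset_Pset: "E \<in> calE N A \<Longrightarrow> E \<subseteq> Pset N"
  by (auto simp: calE_def Eset_def Pset_def)

lemma finite_calE: "finite (calE N A)"
proof (rule finite_subset)
  show "calE N A \<subseteq> Pow (Pow {..<N})" by (auto simp: calE_def Eset_def)
qed simp

lemma norm3_le_norm3_calE:
  assumes "A \<subseteq> Pset N" and "E \<in> calE N A"
  shows "norm3 N A \<le> norm3 N E"
proof -
  have "norm3_ge N A (norm3 N A)"
    using norm3_ge_iff_le_norm3[OF assms(1)] by simp
  moreover have "\<forall>p\<in>A. \<exists>e\<in>E. e \<subseteq> p"
    using assms(2) by (simp add: calE_def)
  ultimately have "norm3_ge N E (norm3 N A)"
    using norm3_ge_if_covered by blast
  then show ?thesis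
    using norm3_ge_iff_le_norm3[OF calE_subset_Pset[OF assms(2)]] by simp
qed

theorem theorem5p26:
  fixes N :: nat and A :: "nat set set"
  assumes "A \<subseteq> Pset N"
  shows "norm3 N A = Min (norm3 N ` calE N A)"
proof -
  have "\<not> norm3_ge N A (Suc (norm3 N A))"
    using norm3_ge_iff_le_norm3[OF assms] by simp
  then obtain E where E: "E \<in> calE N A" "\<not> norm3_ge N E (Suc (norm3 N A))"
    using exists_calE_not_norm3_ge[OF assms] by blast
  then have "norm3 N E \<le> norm3 N A"
    using norm3_ge_iff_le_norm3[OF calE_subset_Pset[OF E(1)]] by simp
  then have "norm3 N A \<in> norm3 N ` calE N A"
    using norm3_le_norm3_calE[OF assms E(1)] E(1) by (metis image_eqI le_antisym)
  then show ?thesis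
    using norm3_le_norm3_calE[OF assms] finite_calE by (intro Min_eqI[symmetric]) auto
qed

end
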